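(* Let $\mathcal{X}=\{x_k\}_{k=1}^\infty$ be a frame for the real Hilbert space $\ell_2$. The following are equivalent: (1) $\mathcal{X}$ is injective; (2) $\overline{\mathrm{span}}\{\tilde{x}_k\}_{k=1}^\infty=\tilde{\mathbb{H}}$.
   Context: A family $\{x_k\}$ is called injective if whenever a Hilbert–Schmidt self-adjoint operator $T$ on $\ell_2$ satisfies $\langle Tx_k,x_k\rangle=0$ for all $k$, then $T=0$. Let $\tilde{\mathbb{H}}=\left(\sum_{i=1}^\infty\oplus\ell_2\right)_{\ell_2}$ be the $\ell_2$-direct sum of countably many copies of real $\ell_2$, with elements $\vec{x}=(\vec{x}_1,\vec{x}_2,\dots)$ and inner product $\langle\vec{x},\vec{y}\rangle=\sum_i\langle\vec{x}_i,\vec{y}_i\rangle$. For $x=(x_i)_{i=1}^\infty\in\ell_2$ (real), define $\tilde{x}=(\vec{x}_1,\vec{x}_2,\dots)\in\tilde{\mathbb{H}}$ where $\vec{x}_n=(x_nx_n,x_nx_{n+1},x_nx_{n+2},\dots)$ for each $n$. *)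

theory Defs
  imports "HOL-Analysis.Analysis"
begin

definition l2 :: "(nat \<Rightarrow> real) set" where
  "l2 = {x. summable (\<lambda>i. (x i)\<^sup>2)}"

definition l2_inner :: "(nat \<Rightarrow> real) \<Rightarrow> (nat \<Rightarrow> real) \<Rightarrow> real" where
  "l2_inner x y = (\<Sum>i. x i * y i)"

definition l2_norm :: "(nat \<Rightarrow> real) \<Rightarrow> real" where
  "l2_norm x = sqrt (\<Sum>i. (x i)\<^sup>2)"

definition unit_vec :: "nat \<Rightarrow> nat \<Rightarrow> real" where
  "unit_vec j = (\<lambda>i. if i = j then 1 else 0)"

definition is_frame :: "(nat \<Rightarrow> (nat \<Rightarrow> real)) \<Rightarrow> bool" where
  "is_frame xs \<longleftrightarrow> (\<forall>k. xs k \<in> l2) \<and>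
     (\<exists>A B. 0 < A \<and> 0 < B \<and>
       (\<forall>y\<in>l2. summable (\<lambda>k. (l2_inner y (xs k))\<^sup>2) \<and>
                A * (l2_norm y)\<^sup>2 \<le> (\<Sum>k. (l2_inner y (xs k))\<^sup>2) \<and>
                (\<Sum>k. (l2_inner y (xs k))\<^sup>2) \<le> B * (l2_norm y)\<^sup>2))"

text \<open>Bounded linear operators on l2 (only their values on l2 matter).\<close>
definition bounded_linear_l2 :: "((nat \<Rightarrow> real) \<Rightarrow> (nat \<Rightarrow> real)) \<Rightarrow> bool" where
  "bounded_linear_l2 T \<longleftrightarrow>
     (\<forall>x\<in>l2. T x \<in> l2) \<and>
     (\<forall>x\<in>l2. \<forall>y\<in>l2. \<forall>a b::real.
         T (\<lambda>i. a * x i + b * y i) = (\<lambda>i. a * T x i + b * T y i)) \<and>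
     (\<exists>C. \<forall>x\<in>l2. l2_norm (T x) \<le> C * l2_norm x)"

definition hilbert_schmidt_l2 :: "((nat \<Rightarrow> real) \<Rightarrow> (nat \<Rightarrow> real)) \<Rightarrow> bool" where
  "hilbert_schmidt_l2 T \<longleftrightarrow> bounded_linear_l2 T \<and>
     summable (\<lambda>j. (l2_norm (T (unit_vec j)))\<^sup>2)"

definition self_adjoint_l2 :: "((nat \<Rightarrow> real) \<Rightarrow> (nat \<Rightarrow> real)) \<Rightarrow> bool" where
  "self_adjoint_l2 T \<longleftrightarrow> (\<forall>x\<in>l2. \<forall>y\<in>l2. l2_inner (T x) y = l2_inner x (T y))"

definition injective_family :: "(nat \<Rightarrow> (nat \<Rightarrow> real)) \<Rightarrow> bool" where
  "injective_family xs \<longleftrightarrow>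
     (\<forall>T. hilbert_schmidt_l2 T \<and> self_adjoint_l2 T \<and>
          (\<forall>k. l2_inner (T (xs k)) (xs k) = 0) \<longrightarrow> (\<forall>x\<in>l2. T x = (\<lambda>i. 0)))"

definition Htilde :: "(nat \<Rightarrow> nat \<Rightarrow> real) set" where
  "Htilde = {X. (\<forall>n. X n \<in> l2) \<and> summable (\<lambda>n. (l2_norm (X n))\<^sup>2)}"

definition Htilde_norm :: "(nat \<Rightarrow> nat \<Rightarrow> real) \<Rightarrow> real" where
  "Htilde_norm X = sqrt (\<Sum>n. (l2_norm (X n))\<^sup>2)"

definition tilde :: "(nat \<Rightarrow> real) \<Rightarrow> nat \<Rightarrow> nat \<Rightarrow> real" where
  "tilde x = (\<lambda>n m. x n * x (n + m))"

definition closed_span_Htilde :: "(nat \<Rightarrow> (nat \<Rightarrow> nat \<Rightarrow> real)) \<Rightarrow> (nat \<Rightarrow> nat \<Rightarrow> real) set" where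
  "closed_span_Htilde V = {Y \<in> Htilde. \<forall>\<epsilon>>0. \<exists>F c. finite F \<and>
       Htilde_norm (\<lambda>n m. Y n m - (\<Sum>k\<in>F. c k * V k n m)) < \<epsilon>}"

end

(*
  A self-adjoint Hilbert-Schmidt operator T on l2 is given by a symmetric matrix M with
  square-summable rows, and its quadratic form only involves the upper triangle of M:
    <T x, x> = sum_n sum_m c_m M(n, n+m) x_n x_(n+m),   c_0 = 1 and c_m = 2 for m > 0.
  This is the Htilde inner product of tilde x with Y(n, m) = c_m M(n, n+m), and M <-> Y is a
  bijection between such matrices and Htilde. So the family is injective iff no nonzero
  vector of Htilde is orthogonal to every tilde x_k, which in the Hilbert space Htilde
  (realised as l2 of l2) says exactly that the tilde x_k have dense span.
*)

theory Submission
  imports Defs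
begin

section \<open>Square-summable sequences in a real inner product space\<close>

definition square_summable :: "(nat \<Rightarrow> 'a::real_normed_vector) set" where
  "square_summable = {f. summable (\<lambda>n. (norm (f n))\<^sup>2)}"

lemma norm_add_square_le:
  fixes a b :: "'a::real_normed_vector"
  shows "(norm (a + b))\<^sup>2 \<le> 2 * (norm a)\<^sup>2 + 2 * (norm b)\<^sup>2"
proof -
  have "(norm (a + b))\<^sup>2 \<le> (norm a + norm b)\<^sup>2"
    by (rule power_mono[OF norm_triangle_ineq]) simp
  also have "\<dots> \<le> 2 * (norm a)\<^sup>2 + 2 * (norm b)\<^sup>2"
    using sum_squares_bound[of "norm a" "norm b"] by (simp add: power2_sum)
  finally show ?thesis .
qed

lemma square_summable_add:
  assumes "f \<in> square_summable" "g \<in> square_summable"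
  shows "(\<lambda>n. f n + g n) \<in> square_summable"
proof -
  have "summable (\<lambda>n. 2 * (norm (f n))\<^sup>2 + 2 * (norm (g n))\<^sup>2)"
    using assms unfolding square_summable_def by (intro summable_add summable_mult) auto
  then show ?thesis
    unfolding square_summable_def mem_Collect_eq
    by (rule summable_comparison_test'[where N = 0]) (simp add: norm_add_square_le)
qed

lemma square_summable_scaleR: "f \<in> square_summable \<Longrightarrow> (\<lambda>n. c *\<^sub>R f n) \<in> square_summable"
  unfolding square_summable_def by (simp add: power_mult_distrib summable_mult)

lemma square_summable_uminus: "f \<in> square_summable \<Longrightarrow> (\<lambda>n. - f n) \<in> square_summable"
  unfolding square_summable_def by simp

lemma square_summable_diff:
  "f \<in> square_summable \<Longrightarrow> g \<in> square_summable \<Longrightarrow> (\<lambda>n. f n - g n) \<in> square_summable"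
  using square_summable_add[of f "\<lambda>n. - g n"] square_summable_uminus[of g] by simp

lemma summable_abs_inner_square_summable:
  fixes f g :: "nat \<Rightarrow> 'a::real_inner"
  assumes "f \<in> square_summable" "g \<in> square_summable"
  shows "summable (\<lambda>n. \<bar>inner (f n) (g n)\<bar>)"
proof -
  have bound: "\<bar>inner (f n) (g n)\<bar> \<le> (norm (f n))\<^sup>2 + (norm (g n))\<^sup>2" for n
    using Cauchy_Schwarz_ineq2[of "f n" "g n"] sum_squares_bound[of "norm (f n)" "norm (g n)"]
      mult_nonneg_nonneg[OF norm_ge_zero norm_ge_zero, of "f n" "g n"]
    by linarith
  have "summable (\<lambda>n. (norm (f n))\<^sup>2 + (norm (g n))\<^sup>2)"
    using assms unfolding square_summable_def mem_Collect_eq by (intro summable_add)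
  then show ?thesis
    by (rule summable_comparison_test'[where N = 0]) (simp add: bound)
qed

lemma summable_inner_square_summable:
  fixes f g :: "nat \<Rightarrow> 'a::real_inner"
  shows "f \<in> square_summable \<Longrightarrow> g \<in> square_summable \<Longrightarrow> summable (\<lambda>n. inner (f n) (g n))"
  by (rule summable_rabs_cancel[OF summable_abs_inner_square_summable])

typedef (overloaded) 'a ell2 = "square_summable :: (nat \<Rightarrow> 'a::real_inner) set"
  by (rule exI[of _ "\<lambda>n. 0"]) (simp add: square_summable_def)

setup_lifting type_definition_ell2

instantiation ell2 :: (real_inner) real_vector
begin
lift_definition zero_ell2 :: "'a ell2" is "\<lambda>n. 0"
  by (simp add: square_summable_def)
lift_definition plus_ell2 :: "'a ell2 \<Rightarrow> 'a ell2 \<Rightarrow> 'a ell2" is "\<lambda>f g n. f n + g n"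
  by (rule square_summable_add)
lift_definition minus_ell2 :: "'a ell2 \<Rightarrow> 'a ell2 \<Rightarrow> 'a ell2" is "\<lambda>f g n. f n - g n"
  by (rule square_summable_diff)
lift_definition uminus_ell2 :: "'a ell2 \<Rightarrow> 'a ell2" is "\<lambda>f n. - f n"
  by (rule square_summable_uminus)
lift_definition scaleR_ell2 :: "real \<Rightarrow> 'a ell2 \<Rightarrow> 'a ell2" is "\<lambda>c f n. c *\<^sub>R f n"
  by (rule square_summable_scaleR)
instance
  by standard (transfer; auto simp: algebra_simps scaleR_add_right scaleR_add_left)+
end

instantiation ell2 :: (real_inner) real_inner
begin
lift_definition inner_ell2 :: "'a ell2 \<Rightarrow> 'a ell2 \<Rightarrow> real" is "\<lambda>f g. \<Sum>n. inner (f n) (g n)" .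
definition norm_ell2 :: "'a ell2 \<Rightarrow> real" where "norm_ell2 x = sqrt (inner x x)"
definition dist_ell2 :: "'a ell2 \<Rightarrow> 'a ell2 \<Rightarrow> real" where "dist_ell2 x y = norm (x - y)"
definition sgn_ell2 :: "'a ell2 \<Rightarrow> 'a ell2" where "sgn_ell2 x = x /\<^sub>R norm x"
definition uniformity_ell2 :: "('a ell2 \<times> 'a ell2) filter" where
  "uniformity_ell2 = (INF e\<in>{0 <..}. principal {(x, y). dist x y < e})"
definition open_ell2 :: "'a ell2 set \<Rightarrow> bool" where
  "open_ell2 U = (\<forall>x\<in>U. eventually (\<lambda>(x', y). x' = x \<longrightarrow> y \<in> U) uniformity)"
instance
proof
  fix x y z :: "'a ell2" and r :: real
  show "inner x y = inner y x"
    by transfer (simp add: inner_commute)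
  show "inner (x + y) z = inner x z + inner y z"
    by transfer (simp add: inner_add_left suminf_add summable_inner_square_summable)
  show "inner (r *\<^sub>R x) y = r * inner x y"
    by transfer (simp add: suminf_mult summable_inner_square_summable)
  show "0 \<le> inner x x"
    by transfer (simp add: suminf_nonneg summable_inner_square_summable)
  show "inner x x = 0 \<longleftrightarrow> x = 0"
    by transfer (auto simp: suminf_eq_zero_iff summable_inner_square_summable fun_eq_iff)
  show "norm x = sqrt (inner x x)"
    by (simp add: norm_ell2_def)
qed (rule sgn_ell2_def dist_ell2_def uniformity_ell2_def open_ell2_def)+
end

lemma summable_norm_Rep_ell2: "summable (\<lambda>n. (norm (Rep_ell2 x n))\<^sup>2)"
  using Rep_ell2[of x] by (simp add: square_summable_def)

lemma norm_ell2_square: "(norm x)\<^sup>2 = (\<Sum>n. (norm (Rep_ell2 x n))\<^sup>2)"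
  by (simp add: power2_norm_eq_inner inner_ell2.rep_eq)

lemma norm_Rep_ell2_le: "norm (Rep_ell2 x n) \<le> norm x"
proof -
  have "(norm (Rep_ell2 x n))\<^sup>2 \<le> (\<Sum>n. (norm (Rep_ell2 x n))\<^sup>2)"
    using sum_le_suminf[OF summable_norm_Rep_ell2, of "{n}"] by simp
  then show ?thesis
    by (simp add: norm_ell2_square power2_le_imp_le)
qed

lemma bounded_linear_Rep_ell2: "bounded_linear (\<lambda>x. Rep_ell2 x n)"
  by (rule bounded_linear_intro[where K = 1])
    (simp_all add: plus_ell2.rep_eq scaleR_ell2.rep_eq norm_Rep_ell2_le)

lemma ell2_tail_bound:
  assumes close: "\<And>j k. N \<le> j \<Longrightarrow> N \<le> k \<Longrightarrow> norm (X j - X k) \<le> e"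
    and lim: "\<And>n. (\<lambda>j. Rep_ell2 (X j) n) \<longlonglongrightarrow> g n" and "N \<le> j"
  shows "(\<lambda>n. Rep_ell2 (X j) n - g n) \<in> square_summable"
    and "(\<Sum>n. (norm (Rep_ell2 (X j) n - g n))\<^sup>2) \<le> e\<^sup>2"
proof -
  have partial: "(\<Sum>n<M. (norm (Rep_ell2 (X j) n - g n))\<^sup>2) \<le> e\<^sup>2" for M
  proof (rule LIMSEQ_le_const2)
    show "(\<lambda>k. \<Sum>n<M. (norm (Rep_ell2 (X j) n - Rep_ell2 (X k) n))\<^sup>2)
            \<longlonglongrightarrow> (\<Sum>n<M. (norm (Rep_ell2 (X j) n - g n))\<^sup>2)"
      by (intro tendsto_intros lim)
    have "(\<Sum>n<M. (norm (Rep_ell2 (X j) n - Rep_ell2 (X k) n))\<^sup>2) \<le> e\<^sup>2" if "N \<le> k" for k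
    proof -
      have "(\<Sum>n<M. (norm (Rep_ell2 (X j - X k) n))\<^sup>2) \<le> (norm (X j - X k))\<^sup>2"
        unfolding norm_ell2_square by (rule sum_le_suminf[OF summable_norm_Rep_ell2]) auto
      also have "\<dots> \<le> e\<^sup>2"
        using close[OF \<open>N \<le> j\<close> that] by (intro power_mono) auto
      finally show ?thesis by (simp add: minus_ell2.rep_eq)
    qed
    then show "\<exists>N. \<forall>k\<ge>N. (\<Sum>n<M. (norm (Rep_ell2 (X j) n - Rep_ell2 (X k) n))\<^sup>2) \<le> e\<^sup>2"
      by blast
  qed
  have "summable (\<lambda>n. (norm (Rep_ell2 (X j) n - g n))\<^sup>2)"
    by (rule summableI_nonneg_bounded[OF _ partial]) simp
  then show "(\<lambda>n. Rep_ell2 (X j) n - g n) \<in> square_summable"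
    and "(\<Sum>n. (norm (Rep_ell2 (X j) n - g n))\<^sup>2) \<le> e\<^sup>2"
    using suminf_le_const[OF _ partial] by (auto simp: square_summable_def)
qed

instance ell2 :: ("{real_inner,complete_space}") complete_space
proof
  fix X :: "nat \<Rightarrow> 'a ell2"
  assume "Cauchy X"
  have "convergent (\<lambda>j. Rep_ell2 (X j) n)" for n
    using bounded_linear.Cauchy[OF bounded_linear_Rep_ell2 \<open>Cauchy X\<close>]
    by (simp add: Cauchy_convergent_iff)
  then obtain g where lim: "\<And>n. (\<lambda>j. Rep_ell2 (X j) n) \<longlonglongrightarrow> g n"
    unfolding convergent_def by metis
  have close: "\<exists>N. \<forall>j\<ge>N. \<forall>k\<ge>N. norm (X j - X k) \<le> e" if e: "0 < e" for e
  proof -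
    obtain N where "\<forall>j\<ge>N. \<forall>k\<ge>N. dist (X j) (X k) < e"
      using metric_CauchyD[OF \<open>Cauchy X\<close> e] by blast
    then show ?thesis
      by (auto simp: dist_norm intro: less_imp_le)
  qed
  obtain N0 where N0: "\<And>j k. N0 \<le> j \<Longrightarrow> N0 \<le> k \<Longrightarrow> norm (X j - X k) \<le> 1"
    using close[of 1] by auto
  from square_summable_diff[OF Rep_ell2[of "X N0"] ell2_tail_bound(1)[where j = N0, OF N0 lim order_refl]]
  have g: "g \<in> square_summable"
    by simp
  have "X \<longlonglongrightarrow> Abs_ell2 g"
  proof (rule metric_LIMSEQ_I)
    fix r :: real
    assume "0 < r"
    then obtain N where N: "\<And>j k. N \<le> j \<Longrightarrow> N \<le> k \<Longrightarrow> norm (X j - X k) \<le> r / 2"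
      using close[of "r / 2"] by auto
    have "dist (X j) (Abs_ell2 g) < r" if "N \<le> j" for j
    proof -
      have "(norm (X j - Abs_ell2 g))\<^sup>2 = (\<Sum>n. (norm (Rep_ell2 (X j) n - g n))\<^sup>2)"
        by (simp add: norm_ell2_square minus_ell2.rep_eq Abs_ell2_inverse g)
      also have "\<dots> \<le> (r / 2)\<^sup>2"
        using ell2_tail_bound(2)[where N = N and j = j, OF N lim that] .
      finally have "norm (X j - Abs_ell2 g) \<le> r / 2"
        by (rule power2_le_imp_le) (use \<open>0 < r\<close> in simp)
      then show ?thesis
        using \<open>0 < r\<close> by (simp add: dist_norm)
    qed
    then show "\<exists>N. \<forall>j\<ge>N. dist (X j) (Abs_ell2 g) < r"
      by blast
  qed
  then show "convergent X"
    by (auto simp: convergent_def)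
qed

section \<open>Nonzero orthogonal vectors in a Hilbert space\<close>

lemma inner_eq_0_if_norm_minimal:
  fixes w s :: "'a::real_inner"
  assumes min: "\<And>t. norm w \<le> norm (w - t *\<^sub>R s)"
  shows "inner w s = 0"
proof (cases "s = 0")
  case False
  define t where "t = inner w s / inner s s"
  have ss: "0 < inner s s"
    using False by simp
  have "(norm (w - t *\<^sub>R s))\<^sup>2 = (norm w)\<^sup>2 - (inner w s)\<^sup>2 / inner s s"
    using ss unfolding power2_norm_eq_inner t_def
    by (simp add: inner_diff_left inner_diff_right inner_commute power2_eq_square field_simps)
  moreover have "(norm w)\<^sup>2 \<le> (norm (w - t *\<^sub>R s))\<^sup>2"
    using min[of t] by (simp add: power_mono)
  ultimately have "(inner w s)\<^sup>2 / inner s s \<le> 0"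
    by linarith
  then show ?thesis
    using ss by (simp add: divide_le_0_iff)
qed simp

lemma Cauchy_minimizing_sequence_subspace:
  fixes y :: "'a::real_inner"
  assumes S: "subspace S" and z: "\<And>j. z j \<in> S"
    and lower: "\<And>s. s \<in> S \<Longrightarrow> d \<le> norm (y - s)"
    and lim: "(\<lambda>j. norm (y - z j)) \<longlonglongrightarrow> d"
  shows "Cauchy z"
proof (rule metric_CauchyI)
  fix r :: real
  assume "0 < r"
  have "0 \<le> d"
    by (rule LIMSEQ_le_const[OF lim]) simp
  have "(\<lambda>j. (norm (y - z j))\<^sup>2) \<longlonglongrightarrow> d\<^sup>2"
    by (intro tendsto_intros lim)
  then have "eventually (\<lambda>j. (norm (y - z j))\<^sup>2 < d\<^sup>2 + r\<^sup>2 / 4) sequentially"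
    using \<open>0 < r\<close> by (intro order_tendstoD(2)) auto
  then obtain N where N: "\<And>j. N \<le> j \<Longrightarrow> (norm (y - z j))\<^sup>2 < d\<^sup>2 + r\<^sup>2 / 4"
    unfolding eventually_sequentially by blast
  have "dist (z i) (z j) < r" if "N \<le> i" "N \<le> j" for i j
  proof -
    text \<open>Parallelogram law, with the midpoint of \<open>z i\<close> and \<open>z j\<close> lying in \<open>S\<close>.\<close>
    have "(norm (z i - z j))\<^sup>2 + 4 * (norm (y - (1/2) *\<^sub>R (z i + z j)))\<^sup>2
          = 2 * (norm (y - z i))\<^sup>2 + 2 * (norm (y - z j))\<^sup>2"
      unfolding power2_norm_eq_inner
      by (simp add: inner_diff_left inner_diff_right inner_add_left inner_add_right
          inner_commute algebra_simps)
    moreover have "d\<^sup>2 \<le> (norm (y - (1/2) *\<^sub>R (z i + z j)))\<^sup>2"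
      using S z \<open>0 \<le> d\<close>
      by (intro power_mono lower) (auto intro: subspace_add subspace_scale)
    ultimately have "(norm (z i - z j))\<^sup>2 < r\<^sup>2"
      using N[OF that(1)] N[OF that(2)] by linarith
    then show ?thesis
      using \<open>0 < r\<close> by (simp add: dist_norm power_less_imp_less_base)
  qed
  then show "\<exists>N. \<forall>i\<ge>N. \<forall>j\<ge>N. dist (z i) (z j) < r"
    by blast
qed

lemma exists_minimizing_sequence:
  assumes "S \<noteq> {}"
  obtains z where "\<And>j. z j \<in> S" and "(\<lambda>j. dist y (z j)) \<longlonglongrightarrow> infdist y S"
proof -
  have "\<exists>z\<in>S. dist y z < infdist y S + inverse (real (Suc j))" for j
  proof (rule ccontr)
    assume "\<not> ?thesis"
    then have "infdist y S + inverse (real (Suc j)) \<le> infdist y S"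
      unfolding infdist_notempty[OF assms] by (intro cINF_greatest[OF assms]) (auto simp: not_less)
    then show False
      by simp
  qed
  then obtain z where z: "\<And>j. z j \<in> S"
    and z_close: "\<And>j. dist y (z j) < infdist y S + inverse (real (Suc j))"
    by metis
  have "(\<lambda>j. dist y (z j)) \<longlonglongrightarrow> infdist y S"
    by (rule tendsto_sandwich[OF _ _ tendsto_const LIMSEQ_inverse_real_of_nat_add])
      (use infdist_le[OF z] less_imp_le[OF z_close] in \<open>auto intro: always_eventually\<close>)
  with z show ?thesis
    by (rule that)
qed

lemma exists_orthogonal_if_notin_closure_subspace:
  fixes y :: "'a::{real_inner,complete_space}"
  assumes S: "subspace S" and y: "y \<notin> closure S"
  shows "\<exists>w. w \<noteq> 0 \<and> (\<forall>s\<in>S. inner w s = 0)"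
proof -
  define d where "d = infdist y S"
  have ne: "S \<noteq> {}"
    using subspace_0[OF S] by blast
  have "0 < d"
    using y infdist_nonneg[of y S] in_closure_iff_infdist_zero[OF ne] by (auto simp: d_def)
  have lower: "d \<le> norm (y - s)" if "s \<in> S" for s
    using infdist_le[OF that, of y] by (simp add: d_def dist_norm)
  obtain z where z: "\<And>j. z j \<in> S" and lim: "(\<lambda>j. norm (y - z j)) \<longlonglongrightarrow> d"
    using exists_minimizing_sequence[OF ne, of y] by (auto simp: d_def dist_norm)
  obtain zl where zl: "z \<longlonglongrightarrow> zl"
    using Cauchy_convergent_iff Cauchy_minimizing_sequence_subspace[OF S z lower lim]
    by (auto simp: convergent_def)
  define w where "w = y - zl"
  have "(\<lambda>j. norm (y - z j)) \<longlonglongrightarrow> norm w"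
    unfolding w_def by (intro tendsto_intros zl)
  then have norm_w: "norm w = d"
    using LIMSEQ_unique[OF lim] by blast
  have "inner w s = 0" if "s \<in> S" for s
  proof (rule inner_eq_0_if_norm_minimal)
    fix t
    have "(\<lambda>j. norm (y - (z j + t *\<^sub>R s))) \<longlonglongrightarrow> norm (w - t *\<^sub>R s)"
      unfolding w_def by (auto intro!: tendsto_eq_intros zl simp: algebra_simps)
    moreover have "d \<le> norm (y - (z j + t *\<^sub>R s))" for j
      using S z that by (intro lower) (auto intro: subspace_add subspace_scale)
    ultimately show "norm w \<le> norm (w - t *\<^sub>R s)"
      unfolding norm_w by (intro LIMSEQ_le_const) auto
  qed
  moreover have "w \<noteq> 0"
    using norm_w \<open>0 < d\<close> by auto
  ultimately show ?thesis
    by blast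
qed

lemma dense_span_iff_orthogonal_trivial:
  fixes B :: "'a::{real_inner,complete_space} set"
  shows "closure (span B) = UNIV \<longleftrightarrow> (\<forall>w. (\<forall>b\<in>B. inner w b = 0) \<longrightarrow> w = 0)"
proof
  assume dense: "closure (span B) = UNIV"
  show "\<forall>w. (\<forall>b\<in>B. inner w b = 0) \<longrightarrow> w = 0"
  proof (intro allI impI)
    fix w
    assume "\<forall>b\<in>B. inner w b = 0"
    then have "span B \<subseteq> {x. inner w x = 0}"
      by (intro span_minimal) (auto simp: subspace_def inner_add_right)
    then have "closure (span B) \<subseteq> {x. inner w x = 0}"
      by (rule closure_minimal) (intro closed_Collect_eq continuous_intros)
    then have "inner w w = 0"
      using dense by blast
    then show "w = 0"
      by simp
  qed
next
  assume trivial: "\<forall>w. (\<forall>b\<in>B. inner w b = 0) \<longrightarrow> w = 0"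
  show "closure (span B) = UNIV"
  proof (rule ccontr)
    assume "closure (span B) \<noteq> UNIV"
    then obtain y where "y \<notin> closure (span B)"
      by blast
    then obtain w where "w \<noteq> 0" "\<forall>s\<in>span B. inner w s = 0"
      using exists_orthogonal_if_notin_closure_subspace[OF subspace_span] by blast
    then show False
      using trivial span_base by blast
  qed
qed

section \<open>The spaces l2 and Htilde\<close>

lemma l2_eq_square_summable: "l2 = square_summable"
  by (simp add: l2_def square_summable_def)

lemma Rep_ell2_in_l2: "Rep_ell2 (x :: real ell2) \<in> l2"
  using Rep_ell2[of x] by (simp add: l2_eq_square_summable)

lemma Rep_ell2_Abs_ell2_l2: "x \<in> l2 \<Longrightarrow> Rep_ell2 (Abs_ell2 x :: real ell2) = x"
  by (rule Abs_ell2_inverse) (simp add: l2_eq_square_summable)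

lemma l2_inner_Rep_ell2: "l2_inner (Rep_ell2 x) (Rep_ell2 y) = inner (x :: real ell2) y"
  by (simp add: l2_inner_def inner_ell2.rep_eq)

lemma l2_norm_Rep_ell2: "l2_norm (Rep_ell2 x) = norm (x :: real ell2)"
  by (simp add: l2_norm_def norm_eq_sqrt_inner inner_ell2.rep_eq power2_eq_square)

lemma l2_norm_nonneg: "x \<in> l2 \<Longrightarrow> 0 \<le> l2_norm x"
  by (simp add: l2_norm_def l2_def suminf_nonneg)

lemma l2_norm_square: "x \<in> l2 \<Longrightarrow> (l2_norm x)\<^sup>2 = (\<Sum>i. (x i)\<^sup>2)"
  by (simp add: l2_norm_def suminf_nonneg l2_def)

lemma
  assumes "x \<in> l2" "y \<in> l2"
  shows summable_abs_mult_l2: "summable (\<lambda>i. \<bar>x i * y i\<bar>)"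
    and suminf_abs_mult_l2_le: "(\<Sum>i. \<bar>x i * y i\<bar>) \<le> l2_norm x * l2_norm y"
proof -
  define ax ay :: "real ell2" where "ax = Abs_ell2 (\<lambda>i. \<bar>x i\<bar>)" and "ay = Abs_ell2 (\<lambda>i. \<bar>y i\<bar>)"
  have abs_l2: "(\<lambda>i. \<bar>x i\<bar>) \<in> l2" "(\<lambda>i. \<bar>y i\<bar>) \<in> l2"
    using assms by (simp_all add: l2_def)
  then show "summable (\<lambda>i. \<bar>x i * y i\<bar>)"
    using summable_inner_square_summable[of "\<lambda>i. \<bar>x i\<bar>" "\<lambda>i. \<bar>y i\<bar>"]
    by (simp add: l2_eq_square_summable abs_mult)
  have "(\<Sum>i. \<bar>x i * y i\<bar>) = inner ax ay"
    using l2_inner_Rep_ell2[of ax ay] abs_l2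
    by (simp add: ax_def ay_def Rep_ell2_Abs_ell2_l2 l2_inner_def abs_mult)
  also have "\<dots> \<le> norm ax * norm ay"
    by (rule norm_cauchy_schwarz)
  also have "\<dots> = l2_norm x * l2_norm y"
    using l2_norm_Rep_ell2[of ax] l2_norm_Rep_ell2[of ay] abs_l2
    by (simp add: ax_def ay_def Rep_ell2_Abs_ell2_l2 l2_norm_def)
  finally show "(\<Sum>i. \<bar>x i * y i\<bar>) \<le> l2_norm x * l2_norm y" .
qed

lemma summable_mult_l2: "x \<in> l2 \<Longrightarrow> y \<in> l2 \<Longrightarrow> summable (\<lambda>i. x i * y i)"
  by (rule summable_rabs_cancel[OF summable_abs_mult_l2])

lemma abs_l2_inner_le: "x \<in> l2 \<Longrightarrow> y \<in> l2 \<Longrightarrow> \<bar>l2_inner x y\<bar> \<le> l2_norm x * l2_norm y"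
  unfolding l2_inner_def
  by (rule order_trans[OF summable_rabs[OF summable_abs_mult_l2] suminf_abs_mult_l2_le])

lemma unit_vec_in_l2: "unit_vec j \<in> l2"
  unfolding l2_def by (rule CollectI, rule summable_finite[of "{j}"]) (auto simp: unit_vec_def)

lemma suminf_single: "(\<And>i. i \<noteq> j \<Longrightarrow> f i = 0) \<Longrightarrow> suminf f = (f j :: real)"
  using suminf_finite[of "{j}" f] by auto

lemma l2_inner_unit_vec_right: "l2_inner y (unit_vec j) = y j"
  unfolding l2_inner_def by (subst suminf_single[of j]) (auto simp: unit_vec_def)

lemma l2_inner_unit_vec_left: "l2_inner (unit_vec j) y = y j"
  unfolding l2_inner_def by (subst suminf_single[of j]) (auto simp: unit_vec_def)

definition Htilde_inner :: "(nat \<Rightarrow> nat \<Rightarrow> real) \<Rightarrow> (nat \<Rightarrow> nat \<Rightarrow> real) \<Rightarrow> real" where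
  "Htilde_inner X Z = (\<Sum>n. l2_inner (X n) (Z n))"

definition to_ell2 :: "(nat \<Rightarrow> nat \<Rightarrow> real) \<Rightarrow> real ell2 ell2" where
  "to_ell2 X = Abs_ell2 (\<lambda>n. Abs_ell2 (X n))"

definition of_ell2 :: "real ell2 ell2 \<Rightarrow> nat \<Rightarrow> nat \<Rightarrow> real" where
  "of_ell2 h = (\<lambda>n. Rep_ell2 (Rep_ell2 h n))"

lemma Htilde_iff_square_summable:
  "X \<in> Htilde \<longleftrightarrow> (\<forall>n. X n \<in> l2) \<and> (\<lambda>n. Abs_ell2 (X n) :: real ell2) \<in> square_summable"
proof -
  have "(\<forall>n. X n \<in> l2) \<Longrightarrow>
      (\<lambda>n. (norm (Abs_ell2 (X n) :: real ell2))\<^sup>2) = (\<lambda>n. (l2_norm (X n))\<^sup>2)"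
    by (simp add: l2_norm_Rep_ell2[symmetric] Rep_ell2_Abs_ell2_l2)
  then show ?thesis
    by (auto simp: Htilde_def square_summable_def)
qed

lemma of_ell2_in_Htilde: "of_ell2 h \<in> Htilde"
  using Rep_ell2[of h]
  by (simp add: Htilde_iff_square_summable of_ell2_def Rep_ell2_in_l2 Rep_ell2_inverse)

lemma Htilde_norm_of_ell2: "Htilde_norm (of_ell2 h) = norm h"
  by (simp add: Htilde_norm_def of_ell2_def l2_norm_Rep_ell2 norm_ell2_square[symmetric])

lemma of_ell2_to_ell2: "X \<in> Htilde \<Longrightarrow> of_ell2 (to_ell2 X) = X"
  unfolding Htilde_iff_square_summable of_ell2_def to_ell2_def
  by (simp add: Abs_ell2_inverse Rep_ell2_Abs_ell2_l2)

lemma to_ell2_of_ell2: "to_ell2 (of_ell2 h) = h"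
proof -
  have "(\<lambda>n. Abs_ell2 (Rep_ell2 (Rep_ell2 h n))) = Rep_ell2 h"
    by (rule ext) (rule Rep_ell2_inverse)
  then show ?thesis
    unfolding of_ell2_def to_ell2_def by (simp only: Rep_ell2_inverse)
qed

lemma of_ell2_diff: "of_ell2 (a - b) = (\<lambda>n m. of_ell2 a n m - of_ell2 b n m)"
  by (simp add: of_ell2_def minus_ell2.rep_eq)

lemma of_ell2_scaleR: "of_ell2 (r *\<^sub>R a) = (\<lambda>n m. r * of_ell2 a n m)"
  by (simp add: of_ell2_def scaleR_ell2.rep_eq)

lemma of_ell2_sum: "of_ell2 (\<Sum>k\<in>F. f k) = (\<lambda>n m. \<Sum>k\<in>F. of_ell2 (f k) n m)"
  by (induction F rule: infinite_finite_induct)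
    (simp_all add: of_ell2_def plus_ell2.rep_eq zero_ell2.rep_eq fun_eq_iff)

lemma inner_eq_Htilde_inner_of_ell2: "inner h g = Htilde_inner (of_ell2 h) (of_ell2 g)"
  by (simp add: of_ell2_def Htilde_inner_def l2_inner_Rep_ell2 inner_ell2.rep_eq)

lemma of_ell2_zero: "of_ell2 0 = (\<lambda>n m. 0)"
  by (simp add: of_ell2_def zero_ell2.rep_eq)

lemma mem_span_range_iff:
  fixes v :: "'i \<Rightarrow> 'a::real_vector"
  shows "y \<in> span (range v) \<longleftrightarrow> (\<exists>F c. finite F \<and> y = (\<Sum>k\<in>F. c k *\<^sub>R v k))"
proof
  assume "y \<in> span (range v)"
  then obtain t r where t: "finite t" "t \<subseteq> range v" and y: "y = (\<Sum>a\<in>t. r a *\<^sub>R a)"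
    unfolding span_explicit by blast
  obtain F where F: "inj_on v F" "t = v ` F"
    using subset_image_inj[of t v UNIV] t(2) by blast
  have "finite F"
    using t(1) F by (simp add: finite_image_iff)
  moreover have "y = (\<Sum>k\<in>F. r (v k) *\<^sub>R v k)"
    unfolding y F(2) using sum.reindex[OF F(1), of "\<lambda>a. r a *\<^sub>R a"] by (simp only: comp_def)
  ultimately show "\<exists>F c. finite F \<and> y = (\<Sum>k\<in>F. c k *\<^sub>R v k)"
    by (intro exI[of _ F] exI[of _ "\<lambda>k. r (v k)"] conjI)
next
  assume "\<exists>F c. finite F \<and> y = (\<Sum>k\<in>F. c k *\<^sub>R v k)"
  then obtain F c where y: "y = (\<Sum>k\<in>F. c k *\<^sub>R v k)"
    by blast
  have "c k *\<^sub>R v k \<in> span (range v)" for k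
    by (rule span_scale[OF span_base[OF rangeI]])
  then show "y \<in> span (range v)"
    unfolding y by (rule span_sum)
qed

lemma Htilde_norm_diff_linear_combination:
  assumes Y: "Y \<in> Htilde" and V: "\<And>k. V k \<in> Htilde"
  shows "Htilde_norm (\<lambda>n m. Y n m - (\<Sum>k\<in>F. c k * V k n m))
    = dist (to_ell2 Y) (\<Sum>k\<in>F. c k *\<^sub>R to_ell2 (V k))"
proof -
  have "(\<lambda>n m. Y n m - (\<Sum>k\<in>F. c k * V k n m))
      = of_ell2 (to_ell2 Y - (\<Sum>k\<in>F. c k *\<^sub>R to_ell2 (V k)))"
    by (simp add: of_ell2_diff of_ell2_sum of_ell2_scaleR of_ell2_to_ell2 Y V)
  then have "Htilde_norm (\<lambda>n m. Y n m - (\<Sum>k\<in>F. c k * V k n m))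
      = norm (to_ell2 Y - (\<Sum>k\<in>F. c k *\<^sub>R to_ell2 (V k)))"
    by (simp only: Htilde_norm_of_ell2)
  then show ?thesis
    by (simp only: dist_norm)
qed

lemma mem_closed_span_Htilde_iff:
  assumes Y: "Y \<in> Htilde" and V: "\<And>k. V k \<in> Htilde"
  shows "Y \<in> closed_span_Htilde V \<longleftrightarrow> to_ell2 Y \<in> closure (span (range (\<lambda>k. to_ell2 (V k))))"
proof -
  let ?approx = "\<lambda>e F c. finite F \<and> Htilde_norm (\<lambda>n m. Y n m - (\<Sum>k\<in>F. c k * V k n m)) < e"
  have "(\<exists>F c. ?approx e F c) \<longleftrightarrow> (\<exists>y\<in>span (range (\<lambda>k. to_ell2 (V k))). dist (to_ell2 Y) y < e)"
    for e
  proof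
    assume "\<exists>F c. ?approx e F c"
    then obtain F c where F: "finite F" and "Htilde_norm (\<lambda>n m. Y n m - (\<Sum>k\<in>F. c k * V k n m)) < e"
      by blast
    then have "dist (to_ell2 Y) (\<Sum>k\<in>F. c k *\<^sub>R to_ell2 (V k)) < e"
      by (simp only: Htilde_norm_diff_linear_combination[OF Y V])
    moreover have "(\<Sum>k\<in>F. c k *\<^sub>R to_ell2 (V k)) \<in> span (range (\<lambda>k. to_ell2 (V k)))"
      using F by (auto simp: mem_span_range_iff)
    ultimately show "\<exists>y\<in>span (range (\<lambda>k. to_ell2 (V k))). dist (to_ell2 Y) y < e"
      by blast
  next
    assume "\<exists>y\<in>span (range (\<lambda>k. to_ell2 (V k))). dist (to_ell2 Y) y < e"
    then obtain y where "y \<in> span (range (\<lambda>k. to_ell2 (V k)))" and y: "dist (to_ell2 Y) y < e"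
      by blast
    then obtain F c where F: "finite F" and "y = (\<Sum>k\<in>F. c k *\<^sub>R to_ell2 (V k))"
      unfolding mem_span_range_iff by blast
    with y have "?approx e F c"
      by (simp only: Htilde_norm_diff_linear_combination[OF Y V] simp_thms)
    then show "\<exists>F c. ?approx e F c"
      by blast
  qed
  then show ?thesis
    unfolding closed_span_Htilde_def closure_approachable dist_commute[of _ "to_ell2 Y"]
    using Y by simp
qed

lemma closed_span_Htilde_eq_Htilde_iff_dense:
  assumes V: "\<And>k. V k \<in> Htilde"
  shows "closed_span_Htilde V = Htilde \<longleftrightarrow> closure (span (range (\<lambda>k. to_ell2 (V k)))) = UNIV"
proof -
  let ?C = "closure (span (range (\<lambda>k. to_ell2 (V k))))"
  have "closed_span_Htilde V = Htilde \<longleftrightarrow> (\<forall>Y\<in>Htilde. Y \<in> closed_span_Htilde V)"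
    unfolding closed_span_Htilde_def by blast
  also have "\<dots> \<longleftrightarrow> (\<forall>Y\<in>Htilde. to_ell2 Y \<in> ?C)"
    using mem_closed_span_Htilde_iff[OF _ V] by simp
  also have "\<dots> \<longleftrightarrow> ?C = UNIV"
  proof
    assume "\<forall>Y\<in>Htilde. to_ell2 Y \<in> ?C"
    then have "to_ell2 (of_ell2 h) \<in> ?C" for h
      using of_ell2_in_Htilde by blast
    then show "?C = UNIV"
      unfolding to_ell2_of_ell2 by blast
  qed simp
  finally show ?thesis .
qed

lemma orthogonal_trivial_ell2_iff_Htilde:
  assumes V: "\<And>k. V k \<in> Htilde"
  shows "(\<forall>w. (\<forall>k. inner w (to_ell2 (V k)) = 0) \<longrightarrow> w = 0) \<longleftrightarrow>
    (\<forall>W\<in>Htilde. (\<forall>k. Htilde_inner W (V k) = 0) \<longrightarrow> W = (\<lambda>n m. 0))"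
proof (intro iffI ballI allI impI)
  fix W
  assume "\<forall>w. (\<forall>k. inner w (to_ell2 (V k)) = 0) \<longrightarrow> w = 0"
    and W: "W \<in> Htilde" and "\<forall>k. Htilde_inner W (V k) = 0"
  then have "to_ell2 W = 0"
    by (simp add: inner_eq_Htilde_inner_of_ell2 of_ell2_to_ell2 V)
  then show "W = (\<lambda>n m. 0)"
    using of_ell2_to_ell2[OF W] of_ell2_zero by simp
next
  fix w
  assume "\<forall>W\<in>Htilde. (\<forall>k. Htilde_inner W (V k) = 0) \<longrightarrow> W = (\<lambda>n m. 0)"
    and "\<forall>k. inner w (to_ell2 (V k)) = 0"
  then have "of_ell2 w = of_ell2 0"
    using of_ell2_in_Htilde by (simp add: inner_eq_Htilde_inner_of_ell2 of_ell2_to_ell2 V of_ell2_zero)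
  then show "w = 0"
    using to_ell2_of_ell2 by metis
qed

lemma closed_span_Htilde_eq_Htilde_iff:
  assumes V: "\<And>k. V k \<in> Htilde"
  shows "closed_span_Htilde V = Htilde \<longleftrightarrow>
    (\<forall>W\<in>Htilde. (\<forall>k. Htilde_inner W (V k) = 0) \<longrightarrow> W = (\<lambda>n m. 0))"
  unfolding closed_span_Htilde_eq_Htilde_iff_dense[OF V] dense_span_iff_orthogonal_trivial
    orthogonal_trivial_ell2_iff_Htilde[OF V, symmetric]
  by simp

section \<open>Absolutely convergent double series\<close>

lemma has_sum_suminf_if_summable_abs:
  fixes h :: "nat \<Rightarrow> real"
  assumes "summable (\<lambda>n. \<bar>h n\<bar>)"
  shows "(h has_sum suminf h) UNIV"
  using assms by (intro norm_summable_imp_has_sum summable_sums) (auto intro: summable_rabs_cancel)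

lemma summable_on_abs_iff_summable_abs:
  fixes h :: "nat \<Rightarrow> real"
  shows "(\<lambda>n. \<bar>h n\<bar>) summable_on UNIV \<longleftrightarrow> summable (\<lambda>n. \<bar>h n\<bar>)"
  using summable_on_UNIV_nonneg_real_iff[of "\<lambda>n. norm (h n)"] by simp

lemma infsum_eq_suminf_if_summable_abs:
  fixes h :: "nat \<Rightarrow> real"
  shows "summable (\<lambda>n. \<bar>h n\<bar>) \<Longrightarrow> infsum h UNIV = suminf h"
  by (rule infsumI[OF has_sum_suminf_if_summable_abs])

lemma summable_abs_suminf_le:
  fixes g :: "nat \<Rightarrow> nat \<Rightarrow> real"
  assumes "\<And>i. summable (\<lambda>j. \<bar>g i j\<bar>)" and "summable (\<lambda>i. \<Sum>j. \<bar>g i j\<bar>)"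
  shows "summable (\<lambda>i. \<bar>\<Sum>j. g i j\<bar>)"
  by (rule summable_comparison_test'[OF assms(2)]) (use summable_rabs[OF assms(1)] in simp)

lemma suminf_swap_abs_summable:
  fixes f :: "nat \<Rightarrow> nat \<Rightarrow> real"
  assumes rows: "\<And>i. summable (\<lambda>j. \<bar>f i j\<bar>)" and total: "summable (\<lambda>i. \<Sum>j. \<bar>f i j\<bar>)"
  shows "(\<Sum>i. \<Sum>j. f i j) = (\<Sum>j. \<Sum>i. f i j)"
    and "\<And>j. summable (\<lambda>i. \<bar>f i j\<bar>)"
    and "summable (\<lambda>j. \<Sum>i. \<bar>f i j\<bar>)"
proof -
  have row_infsum: "infsum (\<lambda>j. norm (f i j)) UNIV = (\<Sum>j. \<bar>f i j\<bar>)" for i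
    using infsum_eq_suminf_if_summable_abs[of "\<lambda>j. \<bar>f i j\<bar>"] rows[of i] by simp
  have "(\<lambda>i. norm (infsum (\<lambda>j. norm (f i j)) UNIV)) summable_on UNIV"
    unfolding row_infsum summable_on_abs_iff_summable_abs
    using total by (simp add: suminf_nonneg rows summable_on_UNIV_nonneg_real_iff)
  then have abs_pairs: "(\<lambda>(i, j). norm (f i j)) summable_on UNIV \<times> UNIV"
    using Infinite_Sum.abs_summable_on_Sigma_iff[where f = "\<lambda>(i, j). f i j" and A = UNIV and B = "\<lambda>_. UNIV"] rows
    by (simp add: summable_on_abs_iff_summable_abs case_prod_unfold)
  then have "(\<lambda>(j, i). norm (f i j)) summable_on UNIV \<times> UNIV"
    using summable_on_swap[of "\<lambda>(i, j). norm (f i j)" UNIV UNIV] by (simp add: case_prod_unfold)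
  then have cols: "\<forall>j. (\<lambda>i. \<bar>f i j\<bar>) summable_on UNIV"
    and cols_total: "(\<lambda>j. \<bar>infsum (\<lambda>i. \<bar>f i j\<bar>) UNIV\<bar>) summable_on UNIV"
    using Infinite_Sum.abs_summable_on_Sigma_iff[where f = "\<lambda>(j, i). f i j" and A = UNIV and B = "\<lambda>_. UNIV"]
    by (simp_all add: case_prod_unfold)
  show col_summable: "summable (\<lambda>i. \<bar>f i j\<bar>)" for j
    using cols summable_on_abs_iff_summable_abs[of "\<lambda>i. f i j"] by simp
  have col_infsum: "infsum (\<lambda>i. \<bar>f i j\<bar>) UNIV = (\<Sum>i. \<bar>f i j\<bar>)" for j
    using infsum_eq_suminf_if_summable_abs[of "\<lambda>i. \<bar>f i j\<bar>"] col_summable[of j] by simp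
  show cols_summable: "summable (\<lambda>j. \<Sum>i. \<bar>f i j\<bar>)"
    using cols_total unfolding col_infsum summable_on_abs_iff_summable_abs
    by (simp add: suminf_nonneg col_summable summable_on_UNIV_nonneg_real_iff)
  have "(\<lambda>(i, j). f i j) summable_on UNIV \<times> UNIV"
    by (rule abs_summable_summable) (use abs_pairs in \<open>simp add: case_prod_unfold\<close>)
  then have "infsum (\<lambda>i. infsum (\<lambda>j. f i j) UNIV) UNIV = infsum (\<lambda>j. infsum (\<lambda>i. f i j) UNIV) UNIV"
    by (rule infsum_swap_banach)
  moreover have "summable (\<lambda>i. \<bar>\<Sum>j. f i j\<bar>)"
    by (rule summable_abs_suminf_le[OF rows total])
  moreover have "summable (\<lambda>j. \<bar>\<Sum>i. f i j\<bar>)"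
    by (rule summable_abs_suminf_le[where g = "\<lambda>j i. f i j", OF col_summable cols_summable])
  ultimately show "(\<Sum>i. \<Sum>j. f i j) = (\<Sum>j. \<Sum>i. f i j)"
    unfolding infsum_eq_suminf_if_summable_abs[OF rows] infsum_eq_suminf_if_summable_abs[OF col_summable]
    by (simp only: infsum_eq_suminf_if_summable_abs)
qed

lemma
  fixes g :: "nat \<Rightarrow> nat \<Rightarrow> real"
  assumes rows: "\<And>i. summable (\<lambda>j. \<bar>g i j\<bar>)" and total: "summable (\<lambda>i. \<Sum>j. \<bar>g i j\<bar>)"
    and sym: "\<And>i j. g i j = g j i"
  shows suminf_strict_upper_eq_strict_lower:
      "(\<Sum>i. \<Sum>j. if i < j then g i j else 0) = (\<Sum>i. \<Sum>j<i. g i j)"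
    and summable_strict_upper: "summable (\<lambda>i. \<Sum>j. if i < j then g i j else 0)"
    and summable_strict_lower: "summable (\<lambda>i. \<Sum>j<i. g i j)"
proof -
  define G where "G i j = (if i < j then g i j else 0)" for i j
  have G_le: "\<bar>G i j\<bar> \<le> \<bar>g i j\<bar>" for i j
    by (simp add: G_def)
  have G_rows: "summable (\<lambda>j. \<bar>G i j\<bar>)" for i
    by (rule summable_comparison_test'[OF rows[of i]]) (simp add: G_le)
  have G_total: "summable (\<lambda>i. \<Sum>j. \<bar>G i j\<bar>)"
  proof (rule summable_comparison_test'[OF total])
    fix i
    show "norm (\<Sum>j. \<bar>G i j\<bar>) \<le> (\<Sum>j. \<bar>g i j\<bar>)"
      using suminf_le[OF G_le G_rows rows] suminf_nonneg[OF G_rows] by simp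
  qed
  have G_column: "(\<Sum>i. G i j) = (\<Sum>i<j. g j i)" for j
  proof -
    have "(\<Sum>i. G i j) = (\<Sum>i<j. G i j)"
      by (rule suminf_finite) (auto simp: G_def)
    also have "\<dots> = (\<Sum>i<j. g j i)"
      by (rule sum.cong[OF refl]) (use sym in \<open>simp add: G_def\<close>)
    finally show ?thesis .
  qed
  have "summable (\<lambda>i. \<Sum>j. G i j)"
    by (rule summable_rabs_cancel[OF summable_abs_suminf_le[OF G_rows G_total]])
  then show "summable (\<lambda>i. \<Sum>j. if i < j then g i j else 0)"
    unfolding G_def .
  have "summable (\<lambda>j. \<Sum>i. G i j)"
    using summable_rabs_cancel[OF summable_abs_suminf_le[where g = "\<lambda>j i. G i j",
          OF suminf_swap_abs_summable(2,3)[OF G_rows G_total]]] .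
  then show "summable (\<lambda>i. \<Sum>j<i. g i j)"
    by (simp only: G_column)
  have "(\<Sum>i. \<Sum>j. G i j) = (\<Sum>j. \<Sum>i<j. g j i)"
    using suminf_swap_abs_summable(1)[OF G_rows G_total] by (simp only: G_column)
  then show "(\<Sum>i. \<Sum>j. if i < j then g i j else 0) = (\<Sum>i. \<Sum>j<i. g i j)"
    unfolding G_def .
qed

definition upper_weight :: "nat \<Rightarrow> real" where
  "upper_weight m = (if m = 0 then 1 else 2)"

lemma suminf_upper_weight_shift:
  fixes h :: "nat \<Rightarrow> real"
  assumes "summable (\<lambda>j. \<bar>h j\<bar>)"
  shows "(\<Sum>m. upper_weight m * h (n + m)) = (\<Sum>m. h (m + n)) + (\<Sum>j. if n < j then h j else 0)"
proof -
  have tail: "summable (\<lambda>m. h (m + n))"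
    by (rule summable_ignore_initial_segment[OF summable_rabs_cancel[OF assms]])
  have strict: "summable (\<lambda>m. if 0 < m then h (m + n) else 0)"
    by (rule summable_comparison_test'[OF summable_ignore_initial_segment[OF assms, of n]]) simp
  have "summable (\<lambda>j. if n < j then h j else 0)"
    by (rule summable_comparison_test'[OF assms]) simp
  from suminf_split_initial_segment[OF this, of n]
  have "(\<Sum>j. if n < j then h j else 0) = (\<Sum>m. if 0 < m then h (m + n) else 0)"
    by (simp add: sum.neutral)
  moreover have "(\<lambda>m. upper_weight m * h (n + m)) = (\<lambda>m. h (m + n) + (if 0 < m then h (m + n) else 0))"
    by (auto simp: upper_weight_def add.commute)
  ultimately show ?thesis
    using suminf_add[OF tail strict] by simp
qed

lemma suminf_weighted_upper_symmetric:
  fixes g :: "nat \<Rightarrow> nat \<Rightarrow> real"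
  assumes rows: "\<And>i. summable (\<lambda>j. \<bar>g i j\<bar>)" and total: "summable (\<lambda>i. \<Sum>j. \<bar>g i j\<bar>)"
    and sym: "\<And>i j. g i j = g j i"
  shows "(\<Sum>n. \<Sum>m. upper_weight m * g n (n + m)) = (\<Sum>i. \<Sum>j. g i j)"
proof -
  define diag_up where "diag_up i = (\<Sum>m. g i (m + i))" for i
  define strict_up where "strict_up i = (\<Sum>j. if i < j then g i j else 0)" for i
  define strict_low where "strict_low i = (\<Sum>j<i. g i j)" for i
  have weighted: "(\<Sum>m. upper_weight m * g n (n + m)) = diag_up n + strict_up n" for n
    unfolding diag_up_def strict_up_def by (rule suminf_upper_weight_shift[OF rows])
  have full: "(\<Sum>j. g i j) = diag_up i + strict_low i" for i
    unfolding diag_up_def strict_low_def by (rule suminf_split_initial_segment[OF summable_rabs_cancel[OF rows]])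
  have up: "summable strict_up" and low: "summable strict_low"
    and up_low: "suminf strict_up = suminf strict_low"
    unfolding strict_up_def strict_low_def
    using summable_strict_upper[OF rows total sym] summable_strict_lower[OF rows total sym]
      suminf_strict_upper_eq_strict_lower[OF rows total sym] by simp_all
  have "summable (\<lambda>i. \<Sum>j. g i j)"
    by (rule summable_rabs_cancel[OF summable_abs_suminf_le[OF rows total]])
  from summable_diff[OF this low] have diag: "summable diag_up"
    by (simp add: full)
  have "(\<Sum>n. \<Sum>m. upper_weight m * g n (n + m)) = suminf diag_up + suminf strict_up"
    by (simp add: weighted suminf_add[OF diag up])
  also have "\<dots> = (\<Sum>i. \<Sum>j. g i j)"
    by (simp add: up_low full suminf_add[OF diag low])
  finally show ?thesis .
qed

section \<open>Matrix operators on l2\<close>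

definition matrix_op :: "(nat \<Rightarrow> nat \<Rightarrow> real) \<Rightarrow> (nat \<Rightarrow> real) \<Rightarrow> nat \<Rightarrow> real" where
  "matrix_op M x = (\<lambda>i. \<Sum>j. M i j * x j)"

lemma Htilde_row_in_l2: "M \<in> Htilde \<Longrightarrow> M i \<in> l2"
  by (simp add: Htilde_def)

lemma Htilde_norm_square: "M \<in> Htilde \<Longrightarrow> (Htilde_norm M)\<^sup>2 = (\<Sum>i. (l2_norm (M i))\<^sup>2)"
  by (simp add: Htilde_def Htilde_norm_def suminf_nonneg)

lemma Htilde_norm_nonneg: "M \<in> Htilde \<Longrightarrow> 0 \<le> Htilde_norm M"
  by (simp add: Htilde_def Htilde_norm_def suminf_nonneg)

lemma matrix_op_eq_l2_inner: "matrix_op M x i = l2_inner (M i) x"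
  by (simp add: matrix_op_def l2_inner_def)

lemma matrix_op_unit_vec: "matrix_op M (unit_vec j) = (\<lambda>i. M i j)"
  unfolding matrix_op_def by (rule ext, subst suminf_single[of j]) (auto simp: unit_vec_def)

lemma
  assumes M: "M \<in> Htilde" and x: "x \<in> l2"
  shows matrix_op_in_l2: "matrix_op M x \<in> l2"
    and l2_norm_matrix_op_le: "l2_norm (matrix_op M x) \<le> Htilde_norm M * l2_norm x"
proof -
  have row_bound: "(matrix_op M x i)\<^sup>2 \<le> (l2_norm (M i))\<^sup>2 * (l2_norm x)\<^sup>2" for i
  proof -
    have "\<bar>matrix_op M x i\<bar> \<le> l2_norm (M i) * l2_norm x"
      unfolding matrix_op_eq_l2_inner by (rule abs_l2_inner_le[OF Htilde_row_in_l2[OF M] x])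
    then show ?thesis
      by (metis abs_ge_zero power2_abs power_mono power_mult_distrib)
  qed
  have rows: "summable (\<lambda>i. (l2_norm (M i))\<^sup>2)"
    using M by (simp add: Htilde_def)
  then have bound: "summable (\<lambda>i. (l2_norm (M i))\<^sup>2 * (l2_norm x)\<^sup>2)"
    by (rule summable_mult2)
  have summable: "summable (\<lambda>i. (matrix_op M x i)\<^sup>2)"
    by (rule summable_comparison_test'[OF bound]) (simp add: row_bound)
  then show "matrix_op M x \<in> l2"
    by (simp add: l2_def)
  have "(l2_norm (matrix_op M x))\<^sup>2 \<le> (\<Sum>i. (l2_norm (M i))\<^sup>2 * (l2_norm x)\<^sup>2)"
    using suminf_le[OF row_bound summable bound] l2_norm_square \<open>matrix_op M x \<in> l2\<close> by simp
  also have "\<dots> = (Htilde_norm M * l2_norm x)\<^sup>2"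
    by (simp add: Htilde_norm_square[OF M] suminf_mult2[OF rows] power_mult_distrib)
  finally show "l2_norm (matrix_op M x) \<le> Htilde_norm M * l2_norm x"
    by (rule power2_le_imp_le) (simp add: Htilde_norm_nonneg[OF M] l2_norm_nonneg[OF x])
qed

lemma matrix_op_linear:
  assumes M: "M \<in> Htilde" and x: "x \<in> l2" and y: "y \<in> l2"
  shows "matrix_op M (\<lambda>i. a * x i + b * y i) = (\<lambda>i. a * matrix_op M x i + b * matrix_op M y i)"
proof
  fix i
  have sx: "summable (\<lambda>j. M i j * x j)" and sy: "summable (\<lambda>j. M i j * y j)"
    using summable_mult_l2[OF Htilde_row_in_l2[OF M]] x y by blast+
  have "matrix_op M (\<lambda>i. a * x i + b * y i) i = (\<Sum>j. a * (M i j * x j) + b * (M i j * y j))"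
    by (simp add: matrix_op_def algebra_simps)
  also have "\<dots> = a * matrix_op M x i + b * matrix_op M y i"
    using sx sy by (simp add: matrix_op_def suminf_add[symmetric] suminf_mult summable_mult)
  finally show "matrix_op M (\<lambda>i. a * x i + b * y i) i = a * matrix_op M x i + b * matrix_op M y i" .
qed

lemma summable_abs_bilinear_Htilde:
  assumes M: "M \<in> Htilde" and x: "x \<in> l2" and y: "y \<in> l2"
  shows "summable (\<lambda>j. \<bar>y i * M i j * x j\<bar>)"
    and "summable (\<lambda>i. \<Sum>j. \<bar>y i * M i j * x j\<bar>)"
proof -
  have split: "\<bar>y i * M i j * x j\<bar> = \<bar>y i\<bar> * \<bar>M i j * x j\<bar>" for i j
    by (simp add: abs_mult)
  have row: "summable (\<lambda>j. \<bar>M i j * x j\<bar>)" for i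
    by (rule summable_abs_mult_l2[OF Htilde_row_in_l2[OF M] x])
  show row_summable: "summable (\<lambda>j. \<bar>y i * M i j * x j\<bar>)" for i
    unfolding split by (rule summable_mult[OF row])
  have row_bound: "(\<Sum>j. \<bar>y i * M i j * x j\<bar>) \<le> \<bar>y i * l2_norm (M i)\<bar> * l2_norm x" for i
  proof -
    have "(\<Sum>j. \<bar>y i * M i j * x j\<bar>) = \<bar>y i\<bar> * (\<Sum>j. \<bar>M i j * x j\<bar>)"
      unfolding split by (rule suminf_mult[OF row])
    also have "\<dots> \<le> \<bar>y i\<bar> * (l2_norm (M i) * l2_norm x)"
      by (rule mult_left_mono[OF suminf_abs_mult_l2_le[OF Htilde_row_in_l2[OF M] x]]) simp
    finally show ?thesis
      using l2_norm_nonneg[OF Htilde_row_in_l2[OF M]] by (simp add: abs_mult)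
  qed
  have "summable (\<lambda>i. \<bar>y i * l2_norm (M i)\<bar> * l2_norm x)"
    using M y by (intro summable_mult2 summable_abs_mult_l2) (simp_all add: Htilde_def l2_def)
  then show "summable (\<lambda>i. \<Sum>j. \<bar>y i * M i j * x j\<bar>)"
  proof (rule summable_comparison_test'[where N = 0])
    fix i
    have "0 \<le> (\<Sum>j. \<bar>y i * M i j * x j\<bar>)"
      by (rule suminf_nonneg[OF row_summable]) simp
    then show "norm (\<Sum>j. \<bar>y i * M i j * x j\<bar>) \<le> \<bar>y i * l2_norm (M i)\<bar> * l2_norm x"
      using row_bound[of i] by simp
  qed
qed

lemma l2_inner_matrix_op_symmetric:
  assumes M: "M \<in> Htilde" and sym: "\<And>i j. M i j = M j i" and x: "x \<in> l2" and y: "y \<in> l2"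
  shows "l2_inner (matrix_op M x) y = l2_inner x (matrix_op M y)"
proof -
  have "matrix_op M x i * y i = (\<Sum>j. y i * M i j * x j)" for i
    using suminf_mult2[OF summable_mult_l2[OF Htilde_row_in_l2[OF M, of i] x], where c = "y i"]
    by (simp add: matrix_op_def mult_ac)
  then have "l2_inner (matrix_op M x) y = (\<Sum>i. \<Sum>j. y i * M i j * x j)"
    by (simp add: l2_inner_def)
  also have "\<dots> = (\<Sum>j. \<Sum>i. y i * M i j * x j)"
    by (rule suminf_swap_abs_summable(1)[OF summable_abs_bilinear_Htilde[OF M x y]])
  also have "\<dots> = l2_inner x (matrix_op M y)"
  proof -
    have "x j * matrix_op M y j = (\<Sum>i. y i * M i j * x j)" for j
      using suminf_mult[OF summable_mult_l2[OF Htilde_row_in_l2[OF M, of j] y], where c = "x j"]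
      by (simp add: matrix_op_def sym[of j] mult_ac)
    then show ?thesis
      by (simp add: l2_inner_def)
  qed
  finally show ?thesis .
qed

lemma hilbert_schmidt_self_adjoint_matrix_op:
  assumes M: "M \<in> Htilde" and sym: "\<And>i j. M i j = M j i"
  shows "hilbert_schmidt_l2 (matrix_op M)" and "self_adjoint_l2 (matrix_op M)"
proof -
  have "bounded_linear_l2 (matrix_op M)"
    unfolding bounded_linear_l2_def
    using matrix_op_in_l2[OF M] l2_norm_matrix_op_le[OF M] matrix_op_linear[OF M] by blast
  moreover have "matrix_op M (unit_vec j) = M j" for j
    using sym by (simp add: matrix_op_unit_vec fun_eq_iff)
  ultimately show "hilbert_schmidt_l2 (matrix_op M)"
    using M by (simp add: hilbert_schmidt_l2_def Htilde_def)
  show "self_adjoint_l2 (matrix_op M)"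
    unfolding self_adjoint_l2_def using l2_inner_matrix_op_symmetric[OF M sym] by blast
qed

lemma hilbert_schmidt_self_adjoint_eq_matrix_op:
  assumes HS: "hilbert_schmidt_l2 T" and SA: "self_adjoint_l2 T"
  obtains M where "M \<in> Htilde" and "\<And>i j. M i j = M j i" and "\<And>x. x \<in> l2 \<Longrightarrow> T x = matrix_op M x"
proof
  define M where "M i = T (unit_vec i)" for i
  have T_l2: "x \<in> l2 \<Longrightarrow> T x \<in> l2" for x
    using HS by (simp add: hilbert_schmidt_l2_def bounded_linear_l2_def)
  have T_sym: "x \<in> l2 \<Longrightarrow> y \<in> l2 \<Longrightarrow> l2_inner (T x) y = l2_inner x (T y)" for x y
    using SA by (simp add: self_adjoint_l2_def)
  show "M \<in> Htilde"
    using HS T_l2[OF unit_vec_in_l2] by (simp add: Htilde_def M_def hilbert_schmidt_l2_def)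
  show "M i j = M j i" for i j
    using T_sym[OF unit_vec_in_l2 unit_vec_in_l2, of i j]
    by (simp add: M_def l2_inner_unit_vec_right l2_inner_unit_vec_left)
  show "T x = matrix_op M x" if x: "x \<in> l2" for x
  proof
    fix i
    have "T x i = l2_inner x (T (unit_vec i))"
      using T_sym[OF x unit_vec_in_l2, of i] by (simp add: l2_inner_unit_vec_right)
    then show "T x i = matrix_op M x i"
      by (simp add: l2_inner_def matrix_op_def M_def mult.commute)
  qed
qed

section \<open>The quadratic form as an inner product with tilde x\<close>

lemma suminf_ignore_initial_segment_le:
  fixes f :: "nat \<Rightarrow> real"
  assumes "summable f" and "\<And>i. 0 \<le> f i"
  shows "(\<Sum>m. f (m + n)) \<le> suminf f"
  using suminf_split_initial_segment[OF assms(1), of n] sum_nonneg[of "{..<n}" f] assms(2) by simp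

lemma Htilde_if_row_bound:
  assumes rows: "\<And>n. summable (\<lambda>m. (X n m)\<^sup>2)"
    and bound: "\<And>n. (\<Sum>m. (X n m)\<^sup>2) \<le> b n" and b: "summable b"
  shows "X \<in> Htilde"
proof -
  have "X n \<in> l2" for n
    using rows by (simp add: l2_def)
  moreover have "summable (\<lambda>n. (l2_norm (X n))\<^sup>2)"
    by (rule summable_comparison_test'[OF b])
      (simp add: l2_norm_square \<open>\<And>n. X n \<in> l2\<close> bound suminf_nonneg rows)
  ultimately show ?thesis
    by (simp add: Htilde_def)
qed

lemma tilde_in_Htilde:
  assumes x: "x \<in> l2"
  shows "tilde x \<in> Htilde"
proof (rule Htilde_if_row_bound)
  have X: "summable (\<lambda>j. (x j)\<^sup>2)"
    using x by (simp add: l2_def)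
  have row: "(\<lambda>m. (tilde x n m)\<^sup>2) = (\<lambda>m. (x n)\<^sup>2 * (x (m + n))\<^sup>2)" for n
    by (simp add: tilde_def power_mult_distrib add.commute)
  show "summable (\<lambda>m. (tilde x n m)\<^sup>2)" for n
    unfolding row by (rule summable_mult[OF summable_ignore_initial_segment[OF X]])
  show "(\<Sum>m. (tilde x n m)\<^sup>2) \<le> (x n)\<^sup>2 * (\<Sum>j. (x j)\<^sup>2)" for n
    unfolding row suminf_mult[OF summable_ignore_initial_segment[OF X]]
    by (rule mult_left_mono[OF suminf_ignore_initial_segment_le[OF X]]) simp_all
  show "summable (\<lambda>n. (x n)\<^sup>2 * (\<Sum>j. (x j)\<^sup>2))"
    by (rule summable_mult2[OF X])
qed

definition upper_coeffs :: "(nat \<Rightarrow> nat \<Rightarrow> real) \<Rightarrow> nat \<Rightarrow> nat \<Rightarrow> real" where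
  "upper_coeffs M = (\<lambda>n m. upper_weight m * M n (n + m))"

definition symmetrize_coeffs :: "(nat \<Rightarrow> nat \<Rightarrow> real) \<Rightarrow> nat \<Rightarrow> nat \<Rightarrow> real" where
  "symmetrize_coeffs W = (\<lambda>i j. if i \<le> j then W i (j - i) / upper_weight (j - i)
                                 else W j (i - j) / upper_weight (i - j))"

lemma symmetrize_coeffs_sym: "symmetrize_coeffs W i j = symmetrize_coeffs W j i"
  by (cases i j rule: linorder_cases) (auto simp: symmetrize_coeffs_def)

lemma upper_coeffs_symmetrize_coeffs: "upper_coeffs (symmetrize_coeffs W) = W"
  by (auto simp: upper_coeffs_def symmetrize_coeffs_def upper_weight_def fun_eq_iff)

lemma symmetric_eq_0_if_upper_coeffs_eq_0:
  assumes sym: "\<And>i j. M i j = M j i" and zero: "upper_coeffs M = (\<lambda>n m. 0)"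
  shows "M i j = 0"
proof -
  have diag: "M n (n + m) = 0" for n m
    using fun_cong[OF fun_cong[OF zero, of n], of m]
    by (simp add: upper_coeffs_def upper_weight_def split: if_splits)
  show ?thesis
    using diag[of i "j - i"] diag[of j "i - j"] sym[of i j] by (cases "i \<le> j") simp_all
qed

lemma upper_coeffs_in_Htilde:
  assumes M: "M \<in> Htilde"
  shows "upper_coeffs M \<in> Htilde"
proof (rule Htilde_if_row_bound)
  have Mn: "summable (\<lambda>j. (M n j)\<^sup>2)" for n
    using Htilde_row_in_l2[OF M] by (simp add: l2_def)
  have row_le: "(upper_coeffs M n m)\<^sup>2 \<le> 4 * (M n (m + n))\<^sup>2" for n m
    by (simp add: upper_coeffs_def upper_weight_def power_mult_distrib add.commute)
  have tail: "summable (\<lambda>m. 4 * (M n (m + n))\<^sup>2)" for n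
    by (rule summable_mult[OF summable_ignore_initial_segment[OF Mn]])
  show rows: "summable (\<lambda>m. (upper_coeffs M n m)\<^sup>2)" for n
    by (rule summable_comparison_test'[OF tail[of n]]) (simp add: row_le)
  show "(\<Sum>m. (upper_coeffs M n m)\<^sup>2) \<le> 4 * (\<Sum>j. (M n j)\<^sup>2)" for n
  proof -
    have "(\<Sum>m. (upper_coeffs M n m)\<^sup>2) \<le> (\<Sum>m. 4 * (M n (m + n))\<^sup>2)"
      by (rule suminf_le[OF row_le rows tail])
    also have "\<dots> \<le> 4 * (\<Sum>j. (M n j)\<^sup>2)"
      unfolding suminf_mult[OF summable_ignore_initial_segment[OF Mn]]
      using suminf_ignore_initial_segment_le[OF Mn] by simp
    finally show ?thesis .
  qed
  show "summable (\<lambda>n. 4 * (\<Sum>j. (M n j)\<^sup>2))"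
    using M l2_norm_square[OF Htilde_row_in_l2[OF M]] by (intro summable_mult) (simp add: Htilde_def)
qed

lemma symmetrize_coeffs_in_Htilde:
  assumes W: "W \<in> Htilde"
  shows "symmetrize_coeffs W \<in> Htilde"
proof (rule Htilde_if_row_bound)
  define N where "N i j = (if i \<le> j then (W i (j - i))\<^sup>2 else 0)" for i j
  have N_nonneg: "0 \<le> N i j" for i j
    by (simp add: N_def)
  have W_rows: "summable (\<lambda>m. (W i m)\<^sup>2)" for i
    using Htilde_row_in_l2[OF W] by (simp add: l2_def)
  have N_shift: "(\<lambda>m. N i (m + i)) = (\<lambda>m. (W i m)\<^sup>2)" for i
    by (simp add: N_def fun_eq_iff)
  have N_rows: "summable (\<lambda>j. N i j)" for i
    using summable_iff_shift[of "N i" i] W_rows[of i] N_shift by simp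
  have N_row_sum: "(\<Sum>j. N i j) = (\<Sum>m. (W i m)\<^sup>2)" for i
    using suminf_split_initial_segment[OF N_rows, of i i] N_shift by (simp add: N_def)
  have W_norms: "summable (\<lambda>i. \<Sum>m. (W i m)\<^sup>2)"
    using W l2_norm_square[OF Htilde_row_in_l2[OF W]] by (simp add: Htilde_def)
  then have "summable (\<lambda>i. \<Sum>j. \<bar>N i j\<bar>)"
    by (simp add: N_nonneg N_row_sum)
  note N_swap = suminf_swap_abs_summable[of N, OF _ this]
  have N_cols: "summable (\<lambda>i. N i j)" for j
    using N_swap(2)[of j] N_nonneg N_rows by simp
  have N_cols_total: "summable (\<lambda>j. \<Sum>i. N i j)"
    using N_swap(3) N_nonneg N_rows by simp
  have entry_le: "(symmetrize_coeffs W i j)\<^sup>2 \<le> N i j + N j i" for i j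
    by (cases i j rule: linorder_cases)
      (auto simp: symmetrize_coeffs_def upper_weight_def N_def power_divide N_nonneg)
  have row_bound: "summable (\<lambda>j. N i j + N j i)" for i
    by (intro summable_add N_rows N_cols)
  show rows: "summable (\<lambda>j. (symmetrize_coeffs W i j)\<^sup>2)" for i
    by (rule summable_comparison_test'[OF row_bound[of i]]) (simp add: entry_le)
  show "(\<Sum>j. (symmetrize_coeffs W i j)\<^sup>2) \<le> (\<Sum>j. N i j) + (\<Sum>j. N j i)" for i
    using suminf_le[OF entry_le rows row_bound] suminf_add[OF N_rows N_cols] by simp
  show "summable (\<lambda>i. (\<Sum>j. N i j) + (\<Sum>j. N j i))"
    using W_norms N_cols_total by (intro summable_add) (simp_all add: N_row_sum)
qed

lemma Htilde_inner_upper_coeffs_tilde: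
  assumes M: "M \<in> Htilde" and sym: "\<And>i j. M i j = M j i" and x: "x \<in> l2"
  shows "Htilde_inner (upper_coeffs M) (tilde x) = l2_inner (matrix_op M x) x"
proof -
  define g where "g i j = x i * M i j * x j" for i j
  have rows: "summable (\<lambda>j. \<bar>g i j\<bar>)" for i
    unfolding g_def by (rule summable_abs_bilinear_Htilde(1)[OF M x x])
  have total: "summable (\<lambda>i. \<Sum>j. \<bar>g i j\<bar>)"
    unfolding g_def by (rule summable_abs_bilinear_Htilde(2)[OF M x x])
  have g_sym: "g i j = g j i" for i j
    by (simp add: g_def sym[of i j])
  have "l2_inner (upper_coeffs M n) (tilde x n) = (\<Sum>m. upper_weight m * g n (n + m))" for n
    by (simp add: l2_inner_def upper_coeffs_def tilde_def g_def mult_ac)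
  then have "Htilde_inner (upper_coeffs M) (tilde x) = (\<Sum>n. \<Sum>m. upper_weight m * g n (n + m))"
    by (simp add: Htilde_inner_def)
  also have "\<dots> = (\<Sum>i. \<Sum>j. g i j)"
    by (rule suminf_weighted_upper_symmetric[OF rows total g_sym])
  also have "\<dots> = l2_inner (matrix_op M x) x"
  proof -
    have "matrix_op M x i * x i = (\<Sum>j. g i j)" for i
      using suminf_mult2[OF summable_mult_l2[OF Htilde_row_in_l2[OF M, of i] x], where c = "x i"]
      by (simp add: matrix_op_def g_def mult_ac)
    then show ?thesis
      by (simp add: l2_inner_def)
  qed
  finally show ?thesis .
qed

section \<open>Injectivity versus orthogonality in Htilde\<close>

lemma Htilde_orthogonal_eq_0_if_injective_family:
  assumes xs: "\<And>k. xs k \<in> l2" and inj: "injective_family xs"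
    and W: "W \<in> Htilde" and orth: "\<And>k. Htilde_inner W (tilde (xs k)) = 0"
  shows "W = (\<lambda>n m. 0)"
proof -
  define M where "M = symmetrize_coeffs W"
  have M: "M \<in> Htilde" and sym: "\<And>i j. M i j = M j i" and W_eq: "W = upper_coeffs M"
    using symmetrize_coeffs_in_Htilde[OF W] symmetrize_coeffs_sym upper_coeffs_symmetrize_coeffs
    by (simp_all add: M_def)
  have "l2_inner (matrix_op M (xs k)) (xs k) = 0" for k
    using orth Htilde_inner_upper_coeffs_tilde[OF M sym xs] W_eq by simp
  then have "\<forall>y\<in>l2. matrix_op M y = (\<lambda>i. 0)"
    using inj hilbert_schmidt_self_adjoint_matrix_op[OF M sym]
    unfolding injective_family_def by blast
  then have "M i j = 0" for i j
    using matrix_op_unit_vec[of M j] unit_vec_in_l2[of j] by (metis (mono_tags))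
  then show "W = (\<lambda>n m. 0)"
    by (simp add: W_eq upper_coeffs_def)
qed

lemma injective_family_if_Htilde_orthogonal_eq_0:
  assumes xs: "\<And>k. xs k \<in> l2"
    and orth_eq_0: "\<And>W. W \<in> Htilde \<Longrightarrow> (\<And>k. Htilde_inner W (tilde (xs k)) = 0) \<Longrightarrow> W = (\<lambda>n m. 0)"
  shows "injective_family xs"
  unfolding injective_family_def
proof (intro allI impI ballI)
  fix T x
  assume T: "hilbert_schmidt_l2 T \<and> self_adjoint_l2 T \<and> (\<forall>k. l2_inner (T (xs k)) (xs k) = 0)"
    and x: "x \<in> l2"
  obtain M where M: "M \<in> Htilde" and sym: "\<And>i j. M i j = M j i"
    and T_eq: "\<And>y. y \<in> l2 \<Longrightarrow> T y = matrix_op M y"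
    using hilbert_schmidt_self_adjoint_eq_matrix_op T by blast
  have "Htilde_inner (upper_coeffs M) (tilde (xs k)) = 0" for k
    using T Htilde_inner_upper_coeffs_tilde[OF M sym xs] T_eq[OF xs] by simp
  then have "upper_coeffs M = (\<lambda>n m. 0)"
    by (rule orth_eq_0[OF upper_coeffs_in_Htilde[OF M]])
  then have "M i j = 0" for i j
    by (rule symmetric_eq_0_if_upper_coeffs_eq_0[OF sym])
  then show "T x = (\<lambda>i. 0)"
    by (simp add: T_eq[OF x] matrix_op_def)
qed

theorem mainTheorem11:
  fixes xs :: "nat \<Rightarrow> (nat \<Rightarrow> real)"
  assumes "is_frame xs"
  shows "injective_family xs \<longleftrightarrow> closed_span_Htilde (\<lambda>k. tilde (xs k)) = Htilde"
proof -
  have xs: "\<And>k. xs k \<in> l2"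
    using assms by (simp add: is_frame_def)
  show ?thesis
    unfolding closed_span_Htilde_eq_Htilde_iff[of "\<lambda>k. tilde (xs k)", OF tilde_in_Htilde[OF xs]]
    using Htilde_orthogonal_eq_0_if_injective_family[where xs = xs, OF xs]
      injective_family_if_Htilde_orthogonal_eq_0[where xs = xs, OF xs] by blast
qed

end
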